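(* An HT-interpretation of the signature $\sigma_1$ is isomorphic to a standard HT-interpretation of $\sigma_1$ if and only if it is an $\omega$-model of $\mathit{Std}\cup\mathit{Defs}$.
   Context: Precomputed terms: a totally ordered set containing all numerals $\overline n$ ($n$ an integer, in 1-1 correspondence with the integers), all symbolic constants and possibly other symbols, in which numerals are contiguous and ordered as the integers. Formulas are two-sorted, with sort general and its subsort integer. Signature $\sigma_0$: numerals as integer object constants; other precomputed terms as general object constants; $|\cdot|,+,-,\times$ as function constants on integers; predicate constants $p/n$ (written $p(\mathbf t)$) with general arguments; binary predicate constants $\neq,<,>,\le,\ge$ ("comparison symbols") with general arguments ($=$ is logical equality). $\sigma_1$ adds, for disjoint lists $\mathbf X,\mathbf V$ of distinct general variables and formula $F$ over $\sigma_0$ with free variables among $\mathbf X,\mathbf V$, predicate constants $\mathit{Atleast}^{\mathbf X;\mathbf V}_F,\mathit{Atmost}^{\mathbf X;\mathbf V}_F$ with $|\mathbf V|+1$ general arguments. Comparison symbols are extensional; $p/n$, $\mathit{Atleast}$, $\mathit{Atmost}$ are intensional. A standard interpretation of $\sigma_0$ has general domain the precomputed terms, integer domain the numerals, object constants denoting themselves, arithmetic symbols with their usual meaning and comparison symbols given by the order on precomputed terms. $\mathit{Std}$: all sentences over $\sigma_0$ without symbols $p/n$ satisfied by standard interpretations. $F^{\mathbf X}_{\mathbf t}$ is substitution. For a precomputed term $r$: $\exists_{\ge r}\mathbf X\,F$ is $\exists\mathbf X_1\cdots\mathbf X_n(\bigwedge_{i=1}^nF^{\mathbf X}_{\mathbf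 X_i}\wedge\bigwedge_{i<j}\neg(\mathbf X_i=\mathbf X_j))$ if $r=\overline n>\overline0$, $\top$ if $r\le\overline0$, $\bot$ if $r>\overline n$ for all $n$; $\exists_{\le r}\mathbf X\,F$ is $\forall\mathbf X_1\cdots\mathbf X_{n+1}(\bigwedge_{i=1}^{n+1}F^{\mathbf X}_{\mathbf X_i}\to\bigvee_{i<j}\mathbf X_i=\mathbf X_j)$ if $r=\overline n\ge\overline0$, $\bot$ if $r<\overline0$, $\top$ if $r>\overline n$ for all $n$. $\mathit{Defs}$: all sentences $\forall\mathbf V(\mathit{Atleast}^{\mathbf X;\mathbf V}_F(\mathbf V,r)\leftrightarrow\exists_{\ge r}\mathbf XF)$ and $\forall\mathbf V(\mathit{Atmost}^{\mathbf X;\mathbf V}_F(\mathbf V,r)\leftrightarrow\exists_{\le r}\mathbf XF)$. HT-interpretations: for an interpretation $I$ of $\sigma_1$ (domains: general, and integer a subset of it), $\sigma_1^I$ adds names $d^*$ for domain elements; $I^{\downarrow}$ is the set of atoms $p(\mathbf d^* )$ with $p$ intensional and $I\models p(\mathbf d^* )$; an HT-interpretation is $\langle\mathcal H,I\rangle$ with $\mathcal H\subseteq I^{\downarrow}$. $\models_{ht}$: intensional atoms $p(\mathbf t)$ hold iff $p(\mathbf d^* )\in\mathcal H$ for $\mathbf d$ the values of $\mathbf t$ in $I$; extensional atoms and equalities iff $I$ satisfies them; $\bot$ never; $\neg F$ iff $I\not\models F$; $\wedge,\vee$ componentwise; $F\to G$ iff ($\not\models_{ht}F$ or $\models_{ht}G$)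 and $I\models F\to G$; $\forall$/$\exists$ over all/some domain elements. An HT-interpretation $\langle\mathcal H,I\rangle$ of $\sigma_1$ is standard if the restriction of $I$ to $\sigma_0$ is standard and $\langle\mathcal H,I\rangle\models_{ht}\mathit{Defs}$. $I$ is an $\omega$-interpretation if every element of the general domain is the value of some precomputed term and every element of the integer domain is the value of some numeral; an $\omega$-model of a set $\Gamma$ of sentences is an HT-interpretation $\langle\mathcal H,I\rangle$ satisfying ($\models_{ht}$) all of $\Gamma$ with $I$ an $\omega$-interpretation. *)

theory Defs
  imports Main
begin

section \<open>Syntax of the two-sorted signatures sigma0 / sigma1\<close>

text \<open>Precomputed terms form a linearly ordered type 'p; the numerals are given by an
  injection num :: int => 'p (assumptions on num are hypotheses of the theorem).
  Variables are either general (GV) or integer (IV); predicate names p come from type 'n.\<close>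

datatype var = GV nat | IV nat

datatype 'p trm = Var var | Cst 'p | Absv "'p trm"
  | Add "'p trm" "'p trm" | Sub "'p trm" "'p trm" | Mul "'p trm" "'p trm"

datatype cmp = CNe | CLt | CGt | CLe | CGe

datatype ('p, 'n) fm =
    FBot
  | FAtom "('p, 'n) ipred" "'p trm list"
  | FCmp cmp "'p trm" "'p trm"
  | FEq "'p trm" "'p trm"
  | FNot "('p, 'n) fm"
  | FAnd "('p, 'n) fm" "('p, 'n) fm"
  | FOr "('p, 'n) fm" "('p, 'n) fm"
  | FImp "('p, 'n) fm" "('p, 'n) fm"
  | FAll var "('p, 'n) fm"
  | FEx var "('p, 'n) fm"
and ('p, 'n) ipred =
    PN 'n nat
  | AtLeast "nat list" "nat list" "('p, 'n) fm"  \<comment> \<open>Atleast^{X;V}_F (X, V lists of general variables)\<close>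
  | AtMost "nat list" "nat list" "('p, 'n) fm"

fun iterm :: "(int \<Rightarrow> 'p) \<Rightarrow> 'p trm \<Rightarrow> bool" where
  "iterm num (Var (IV _)) = True"
| "iterm num (Var (GV _)) = False"
| "iterm num (Cst c) = (c \<in> range num)"
| "iterm num (Absv t) = iterm num t"
| "iterm num (Add a b) = (iterm num a \<and> iterm num b)"
| "iterm num (Sub a b) = (iterm num a \<and> iterm num b)"
| "iterm num (Mul a b) = (iterm num a \<and> iterm num b)"

fun gterm :: "(int \<Rightarrow> 'p) \<Rightarrow> 'p trm \<Rightarrow> bool" where
  "gterm num (Var _) = True"
| "gterm num (Cst _) = True"
| "gterm num t = iterm num t"

fun tvars :: "'p trm \<Rightarrow> var set" where
  "tvars (Var v) = {v}"
| "tvars (Cst _) = {}"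
| "tvars (Absv t) = tvars t"
| "tvars (Add a b) = tvars a \<union> tvars b"
| "tvars (Sub a b) = tvars a \<union> tvars b"
| "tvars (Mul a b) = tvars a \<union> tvars b"

fun fv :: "('p, 'n) fm \<Rightarrow> var set" where
  "fv FBot = {}"
| "fv (FAtom p ts) = \<Union> (tvars ` set ts)"
| "fv (FCmp c a b) = tvars a \<union> tvars b"
| "fv (FEq a b) = tvars a \<union> tvars b"
| "fv (FNot F) = fv F"
| "fv (FAnd F G) = fv F \<union> fv G"
| "fv (FOr F G) = fv F \<union> fv G"
| "fv (FImp F G) = fv F \<union> fv G"
| "fv (FAll v F) = fv F - {v}"
| "fv (FEx v F) = fv F - {v}"

fun allv :: "('p, 'n) fm \<Rightarrow> var set" where
  "allv FBot = {}"
| "allv (FAtom p ts) = \<Union> (tvars ` set ts)"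
| "allv (FCmp c a b) = tvars a \<union> tvars b"
| "allv (FEq a b) = tvars a \<union> tvars b"
| "allv (FNot F) = allv F"
| "allv (FAnd F G) = allv F \<union> allv G"
| "allv (FOr F G) = allv F \<union> allv G"
| "allv (FImp F G) = allv F \<union> allv G"
| "allv (FAll v F) = insert v (allv F)"
| "allv (FEx v F) = insert v (allv F)"

fun sigma0 :: "('p, 'n) fm \<Rightarrow> bool" where
  "sigma0 FBot = True"
| "sigma0 (FAtom (PN _ _) _) = True"
| "sigma0 (FAtom _ _) = False"
| "sigma0 (FCmp c a b) = True"
| "sigma0 (FEq a b) = True"
| "sigma0 (FNot F) = sigma0 F"
| "sigma0 (FAnd F G) = (sigma0 F \<and> sigma0 G)"
| "sigma0 (FOr F G) = (sigma0 F \<and> sigma0 G)"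
| "sigma0 (FImp F G) = (sigma0 F \<and> sigma0 G)"
| "sigma0 (FAll v F) = sigma0 F"
| "sigma0 (FEx v F) = sigma0 F"

fun no_atoms :: "('p, 'n) fm \<Rightarrow> bool" where
  "no_atoms FBot = True"
| "no_atoms (FAtom _ _) = False"
| "no_atoms (FCmp c a b) = True"
| "no_atoms (FEq a b) = True"
| "no_atoms (FNot F) = no_atoms F"
| "no_atoms (FAnd F G) = (no_atoms F \<and> no_atoms G)"
| "no_atoms (FOr F G) = (no_atoms F \<and> no_atoms G)"
| "no_atoms (FImp F G) = (no_atoms F \<and> no_atoms G)"
| "no_atoms (FAll v F) = no_atoms F"
| "no_atoms (FEx v F) = no_atoms F"

fun wf_fm :: "(int \<Rightarrow> 'p) \<Rightarrow> ('p, 'n) fm \<Rightarrow> bool"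
and wf_pred :: "(int \<Rightarrow> 'p) \<Rightarrow> ('p, 'n) ipred \<Rightarrow> nat \<Rightarrow> bool" where
  "wf_fm num FBot = True"
| "wf_fm num (FAtom p ts) = (wf_pred num p (length ts) \<and> (\<forall>t\<in>set ts. gterm num t))"
| "wf_fm num (FCmp c a b) = (gterm num a \<and> gterm num b)"
| "wf_fm num (FEq a b) = (gterm num a \<and> gterm num b)"
| "wf_fm num (FNot F) = wf_fm num F"
| "wf_fm num (FAnd F G) = (wf_fm num F \<and> wf_fm num G)"
| "wf_fm num (FOr F G) = (wf_fm num F \<and> wf_fm num G)"
| "wf_fm num (FImp F G) = (wf_fm num F \<and> wf_fm num G)"
| "wf_fm num (FAll v F) = wf_fm num F"
| "wf_fm num (FEx v F) = wf_fm num F"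
| "wf_pred num (PN n k) l = (l = k)"
| "wf_pred num (AtLeast X V F) l = (distinct X \<and> distinct V \<and> set X \<inter> set V = {}
      \<and> wf_fm num F \<and> sigma0 F \<and> fv F \<subseteq> GV ` (set X \<union> set V) \<and> l = length V + 1)"
| "wf_pred num (AtMost X V F) l = (distinct X \<and> distinct V \<and> set X \<inter> set V = {}
      \<and> wf_fm num F \<and> sigma0 F \<and> fv F \<subseteq> GV ` (set X \<union> set V) \<and> l = length V + 1)"

fun arity :: "('p, 'n) ipred \<Rightarrow> nat" where
  "arity (PN n k) = k"
| "arity (AtLeast X V F) = length V + 1"
| "arity (AtMost X V F) = length V + 1"

definition sentence :: "(int \<Rightarrow> 'p) \<Rightarrow> ('p, 'n) fm \<Rightarrow> bool" where
  "sentence num F \<longleftrightarrow> wf_fm num F \<and> fv F = {}"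

section \<open>Substitution and the formulas with counting quantifiers\<close>

fun tsubst :: "(var \<Rightarrow> 'p trm) \<Rightarrow> 'p trm \<Rightarrow> 'p trm" where
  "tsubst s (Var v) = s v"
| "tsubst s (Cst c) = Cst c"
| "tsubst s (Absv t) = Absv (tsubst s t)"
| "tsubst s (Add a b) = Add (tsubst s a) (tsubst s b)"
| "tsubst s (Sub a b) = Sub (tsubst s a) (tsubst s b)"
| "tsubst s (Mul a b) = Mul (tsubst s a) (tsubst s b)"

text \<open>Substitution for free occurrences (no renaming of bound variables; only applied below
  with fresh variables, so no capture occurs).\<close>
fun fsubst :: "(var \<Rightarrow> 'p trm) \<Rightarrow> ('p, 'n) fm \<Rightarrow> ('p, 'n) fm" where
  "fsubst s FBot = FBot"
| "fsubst s (FAtom p ts) = FAtom p (map (tsubst s) ts)"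
| "fsubst s (FCmp c a b) = FCmp c (tsubst s a) (tsubst s b)"
| "fsubst s (FEq a b) = FEq (tsubst s a) (tsubst s b)"
| "fsubst s (FNot F) = FNot (fsubst s F)"
| "fsubst s (FAnd F G) = FAnd (fsubst s F) (fsubst s G)"
| "fsubst s (FOr F G) = FOr (fsubst s F) (fsubst s G)"
| "fsubst s (FImp F G) = FImp (fsubst s F) (fsubst s G)"
| "fsubst s (FAll v F) = FAll v (fsubst (s(v := Var v)) F)"
| "fsubst s (FEx v F) = FEx v (fsubst (s(v := Var v)) F)"

definition FTop :: "('p, 'n) fm" where "FTop = FNot FBot"

definition conj_list :: "('p, 'n) fm list \<Rightarrow> ('p, 'n) fm" where
  "conj_list Fs = foldr FAnd Fs FTop"

definition disj_list :: "('p, 'n) fm list \<Rightarrow> ('p, 'n) fm" where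
  "disj_list Fs = foldr FOr Fs FBot"

definition exs :: "var list \<Rightarrow> ('p, 'n) fm \<Rightarrow> ('p, 'n) fm" where
  "exs vs F = foldr FEx vs F"

definition alls :: "var list \<Rightarrow> ('p, 'n) fm \<Rightarrow> ('p, 'n) fm" where
  "alls vs F = foldr FAll vs F"

definition eq_tuple :: "nat list \<Rightarrow> nat list \<Rightarrow> ('p, 'n) fm" where
  "eq_tuple xs ys = conj_list (map2 (\<lambda>x y. FEq (Var (GV x)) (Var (GV y))) xs ys)"

definition inst :: "nat list \<Rightarrow> ('p, 'n) fm \<Rightarrow> nat list \<Rightarrow> ('p, 'n) fm" where
  "inst X F Y = fsubst (\<lambda>v. case v of
        GV x \<Rightarrow> (case map_of (zip X Y) x of Some y \<Rightarrow> Var (GV y) | None \<Rightarrow> Var v)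
      | IV _ \<Rightarrow> Var v) F"

fun varnum :: "var \<Rightarrow> nat" where "varnum (GV n) = n" | "varnum (IV n) = n"

text \<open>A base index above all variables occurring in X, V, F; the fresh tuples X_1, X_2, ...
  are built from general variables above it.\<close>
definition fresh_base :: "nat list \<Rightarrow> nat list \<Rightarrow> ('p, 'n) fm \<Rightarrow> nat" where
  "fresh_base X V F = Suc (Max ({0} \<union> set X \<union> set V \<union> varnum ` allv F))"

definition fresh_tuple :: "nat \<Rightarrow> nat \<Rightarrow> nat \<Rightarrow> nat list" where
  "fresh_tuple b k i = map (\<lambda>j. b + i * k + j) [0..<k]"

definition pairs :: "nat \<Rightarrow> (nat \<times> nat) list" where
  "pairs n = [(i, j). i \<leftarrow> [1..<n+1], j \<leftarrow> [1..<n+1], i < j]"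

text \<open>exists_{>= r} X F.  The final else-branch is the case "r > numeral n for all n"
  (by contiguity of the numerals this is the only remaining case).\<close>
definition exists_ge :: "(int \<Rightarrow> 'p::linorder) \<Rightarrow> nat list \<Rightarrow> nat list \<Rightarrow> ('p, 'n) fm \<Rightarrow> 'p
    \<Rightarrow> ('p, 'n) fm" where
  "exists_ge num X V F r =
    (if \<exists>n>0. r = num n then
       (let n = nat (THE n. r = num n); b = fresh_base X V F;
            T = fresh_tuple b (length X) in
        exs (map GV (concat (map T [1..<n+1])))
          (FAnd (conj_list (map (\<lambda>i. inst X F (T i)) [1..<n+1]))
                (conj_list (map (\<lambda>(i, j). FNot (eq_tuple (T i) (T j))) (pairs n)))))
     else if r \<le> num 0 then FTop
     else FBot)"

text \<open>exists_{<= r} X F.  The final else-branch is the case "r > numeral n for all n".\<close>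
definition exists_le :: "(int \<Rightarrow> 'p::linorder) \<Rightarrow> nat list \<Rightarrow> nat list \<Rightarrow> ('p, 'n) fm \<Rightarrow> 'p
    \<Rightarrow> ('p, 'n) fm" where
  "exists_le num X V F r =
    (if \<exists>n\<ge>0. r = num n then
       (let m = nat (THE n. r = num n) + 1; b = fresh_base X V F;
            T = fresh_tuple b (length X) in
        alls (map GV (concat (map T [1..<m+1])))
          (FImp (conj_list (map (\<lambda>i. inst X F (T i)) [1..<m+1]))
                (disj_list (map (\<lambda>(i, j). eq_tuple (T i) (T j)) (pairs m)))))
     else if r < num 0 then FBot
     else FTop)"

definition FIff :: "('p, 'n) fm \<Rightarrow> ('p, 'n) fm \<Rightarrow> ('p, 'n) fm" where
  "FIff F G = FAnd (FImp F G) (FImp G F)"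

definition DefsS :: "(int \<Rightarrow> 'p::linorder) \<Rightarrow> ('p, 'n) fm set" where
  "DefsS num =
     {alls (map GV V) (FIff (FAtom (AtLeast X V F) (map (\<lambda>v. Var (GV v)) V @ [Cst r]))
                            (exists_ge num X V F r))
       | X V F r. wf_pred num (AtLeast X V F) (length V + 1)}
   \<union> {alls (map GV V) (FIff (FAtom (AtMost X V F) (map (\<lambda>v. Var (GV v)) V @ [Cst r]))
                            (exists_le num X V F r))
       | X V F r. wf_pred num (AtMost X V F) (length V + 1)}"

section \<open>Semantics\<close>

text \<open>An interpretation of sigma1 with domain elements of type 'd: a general domain and an
  integer domain, values of object constants, the arithmetic functions (meaningful on the
  integer domain), the comparison relations and the intensional relations.\<close>
record ('p, 'n, 'd) interp =
  gdom :: "'d set"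
  idom :: "'d set"
  cnst :: "'p \<Rightarrow> 'd"
  fabs :: "'d \<Rightarrow> 'd"
  fplus :: "'d \<Rightarrow> 'd \<Rightarrow> 'd"
  fminus :: "'d \<Rightarrow> 'd \<Rightarrow> 'd"
  ftimes :: "'d \<Rightarrow> 'd \<Rightarrow> 'd"
  cmpr :: "cmp \<Rightarrow> 'd \<Rightarrow> 'd \<Rightarrow> bool"
  ipr :: "('p, 'n) ipred \<Rightarrow> 'd list \<Rightarrow> bool"

definition is_interp :: "(int \<Rightarrow> 'p) \<Rightarrow> ('p, 'n, 'd) interp \<Rightarrow> bool" where
  "is_interp num I \<longleftrightarrow> idom I \<subseteq> gdom I \<and> (\<forall>c. cnst I c \<in> gdom I)
     \<and> (\<forall>n. cnst I (num n) \<in> idom I)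
     \<and> (\<forall>a\<in>idom I. fabs I a \<in> idom I)
     \<and> (\<forall>a\<in>idom I. \<forall>b\<in>idom I. fplus I a b \<in> idom I \<and> fminus I a b \<in> idom I
                                   \<and> ftimes I a b \<in> idom I)"

fun vdom :: "('p, 'n, 'd) interp \<Rightarrow> var \<Rightarrow> 'd set" where
  "vdom I (GV _) = gdom I" | "vdom I (IV _) = idom I"

definition valid_env :: "('p, 'n, 'd) interp \<Rightarrow> (var \<Rightarrow> 'd) \<Rightarrow> bool" where
  "valid_env I e \<longleftrightarrow> (\<forall>v. e v \<in> vdom I v)"

fun teval :: "('p, 'n, 'd) interp \<Rightarrow> (var \<Rightarrow> 'd) \<Rightarrow> 'p trm \<Rightarrow> 'd" where
  "teval I e (Var v) = e v"
| "teval I e (Cst c) = cnst I c"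
| "teval I e (Absv t) = fabs I (teval I e t)"
| "teval I e (Add a b) = fplus I (teval I e a) (teval I e b)"
| "teval I e (Sub a b) = fminus I (teval I e a) (teval I e b)"
| "teval I e (Mul a b) = ftimes I (teval I e a) (teval I e b)"

fun csat :: "('p, 'n, 'd) interp \<Rightarrow> (var \<Rightarrow> 'd) \<Rightarrow> ('p, 'n) fm \<Rightarrow> bool" where
  "csat I e FBot = False"
| "csat I e (FAtom p ts) = ipr I p (map (teval I e) ts)"
| "csat I e (FCmp c a b) = cmpr I c (teval I e a) (teval I e b)"
| "csat I e (FEq a b) = (teval I e a = teval I e b)"
| "csat I e (FNot F) = (\<not> csat I e F)"
| "csat I e (FAnd F G) = (csat I e F \<and> csat I e G)"
| "csat I e (FOr F G) = (csat I e F \<or> csat I e G)"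
| "csat I e (FImp F G) = (csat I e F \<longrightarrow> csat I e G)"
| "csat I e (FAll v F) = (\<forall>d\<in>vdom I v. csat I (e(v := d)) F)"
| "csat I e (FEx v F) = (\<exists>d\<in>vdom I v. csat I (e(v := d)) F)"

fun hsat :: "(('p, 'n) ipred \<Rightarrow> 'd list \<Rightarrow> bool) \<Rightarrow> ('p, 'n, 'd) interp \<Rightarrow> (var \<Rightarrow> 'd)
    \<Rightarrow> ('p, 'n) fm \<Rightarrow> bool" where
  "hsat H I e FBot = False"
| "hsat H I e (FAtom p ts) = H p (map (teval I e) ts)"
| "hsat H I e (FCmp c a b) = cmpr I c (teval I e a) (teval I e b)"
| "hsat H I e (FEq a b) = (teval I e a = teval I e b)"
| "hsat H I e (FNot F) = (\<not> csat I e F)"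
| "hsat H I e (FAnd F G) = (hsat H I e F \<and> hsat H I e G)"
| "hsat H I e (FOr F G) = (hsat H I e F \<or> hsat H I e G)"
| "hsat H I e (FImp F G) = ((\<not> hsat H I e F \<or> hsat H I e G) \<and> csat I e (FImp F G))"
| "hsat H I e (FAll v F) = (\<forall>d\<in>vdom I v. hsat H I (e(v := d)) F)"
| "hsat H I e (FEx v F) = (\<exists>d\<in>vdom I v. hsat H I (e(v := d)) F)"

definition csat_sent :: "('p, 'n, 'd) interp \<Rightarrow> ('p, 'n) fm \<Rightarrow> bool" where
  "csat_sent I F \<longleftrightarrow> (\<forall>e. valid_env I e \<longrightarrow> csat I e F)"

definition hsat_sent :: "(('p, 'n) ipred \<Rightarrow> 'd list \<Rightarrow> bool) \<Rightarrow> ('p, 'n, 'd) interp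
    \<Rightarrow> ('p, 'n) fm \<Rightarrow> bool" where
  "hsat_sent H I F \<longleftrightarrow> (\<forall>e. valid_env I e \<longrightarrow> hsat H I e F)"

text \<open>HT-interpretation: H is a subset of the intensional atoms p(d*) true in I
  (p a predicate constant of sigma1 applied to arity-many domain elements).\<close>
definition ht_interp :: "(int \<Rightarrow> 'p) \<Rightarrow> (('p, 'n) ipred \<Rightarrow> 'd list \<Rightarrow> bool)
    \<Rightarrow> ('p, 'n, 'd) interp \<Rightarrow> bool" where
  "ht_interp num H I \<longleftrightarrow> is_interp num I \<and>
     (\<forall>p ds. H p ds \<longrightarrow> wf_pred num p (arity p) \<and> length ds = arity p
                       \<and> set ds \<subseteq> gdom I \<and> ipr I p ds)"

text \<open>Standard interpretation of sigma0 (restriction of an interpretation to sigma0).\<close>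
definition std0 :: "(int \<Rightarrow> 'p::linorder) \<Rightarrow> ('p, 'n, 'p) interp \<Rightarrow> bool" where
  "std0 num J \<longleftrightarrow> gdom J = UNIV \<and> idom J = range num \<and> (\<forall>c. cnst J c = c)
     \<and> (\<forall>a. fabs J (num a) = num \<bar>a\<bar>)
     \<and> (\<forall>a b. fplus J (num a) (num b) = num (a + b))
     \<and> (\<forall>a b. fminus J (num a) (num b) = num (a - b))
     \<and> (\<forall>a b. ftimes J (num a) (num b) = num (a * b))
     \<and> (\<forall>x y. cmpr J CNe x y = (x \<noteq> y)) \<and> (\<forall>x y. cmpr J CLt x y = (x < y))
     \<and> (\<forall>x y. cmpr J CGt x y = (x > y)) \<and> (\<forall>x y. cmpr J CLe x y = (x \<le> y))
     \<and> (\<forall>x y. cmpr J CGe x y = (x \<ge> y))"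

definition StdS :: "(int \<Rightarrow> 'p::linorder) \<Rightarrow> ('p, 'n) fm set" where
  "StdS num = {F. sentence num F \<and> no_atoms F \<and>
                  (\<forall>J :: ('p, 'n, 'p) interp. std0 num J \<longrightarrow> csat_sent J F)}"

definition std_ht :: "(int \<Rightarrow> 'p::linorder) \<Rightarrow> (('p, 'n) ipred \<Rightarrow> 'p list \<Rightarrow> bool)
    \<Rightarrow> ('p, 'n, 'p) interp \<Rightarrow> bool" where
  "std_ht num H J \<longleftrightarrow> std0 num J \<and> ht_interp num H J \<and> (\<forall>F\<in>DefsS num. hsat_sent H J F)"

definition omega_interp :: "(int \<Rightarrow> 'p) \<Rightarrow> ('p, 'n, 'd) interp \<Rightarrow> bool" where
  "omega_interp num I \<longleftrightarrow> (\<forall>d\<in>gdom I. \<exists>c. cnst I c = d) \<and> (\<forall>d\<in>idom I. \<exists>n. cnst I (num n) = d)"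

definition omega_model :: "(int \<Rightarrow> 'p) \<Rightarrow> ('p, 'n) fm set
    \<Rightarrow> (('p, 'n) ipred \<Rightarrow> 'd list \<Rightarrow> bool) \<Rightarrow> ('p, 'n, 'd) interp \<Rightarrow> bool" where
  "omega_model num \<Gamma> H I \<longleftrightarrow> ht_interp num H I \<and> omega_interp num I
     \<and> (\<forall>F\<in>\<Gamma>. hsat_sent H I F)"

definition ht_iso :: "(('p, 'n) ipred \<Rightarrow> 'd list \<Rightarrow> bool) \<Rightarrow> ('p, 'n, 'd) interp
    \<Rightarrow> (('p, 'n) ipred \<Rightarrow> 'e list \<Rightarrow> bool) \<Rightarrow> ('p, 'n, 'e) interp \<Rightarrow> bool" where
  "ht_iso H I H' J \<longleftrightarrow> (\<exists>f. bij_betw f (gdom I) (gdom J) \<and> f ` idom I = idom J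
     \<and> (\<forall>c. f (cnst I c) = cnst J c)
     \<and> (\<forall>a\<in>idom I. f (fabs I a) = fabs J (f a))
     \<and> (\<forall>a\<in>idom I. \<forall>b\<in>idom I. f (fplus I a b) = fplus J (f a) (f b)
           \<and> f (fminus I a b) = fminus J (f a) (f b) \<and> f (ftimes I a b) = ftimes J (f a) (f b))
     \<and> (\<forall>c. \<forall>a\<in>gdom I. \<forall>b\<in>gdom I. cmpr I c a b = cmpr J c (f a) (f b))
     \<and> (\<forall>p. \<forall>ds\<in>lists (gdom I). ipr I p ds = ipr J p (map f ds)
                                 \<and> H p ds = H' p (map f ds)))"

end

theory Submission
  imports Defs
begin

(* Satisfaction of formulas with well-sorted terms, classical as well as in the sense of
  HT-interpretations, is invariant under isomorphisms.  Std and Defs consist of such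
  formulas, so an HT-interpretation isomorphic to a standard one satisfies both, and it is
  an omega-interpretation because the isomorphism sends c^I to c.  Conversely, in an
  omega-model of Std the map c |-> c^I is onto the general domain, and the Std sentences
  c = d, |n| = m, n + m = k, c < d, ... make it injective and compatible with the standard
  arithmetic and order; transporting I along it yields a standard interpretation isomorphic
  to I, which satisfies Defs by invariance again. *)

fun well_sorted :: "(int \<Rightarrow> 'p) \<Rightarrow> ('p, 'n) fm \<Rightarrow> bool" where
  "well_sorted num FBot = True"
| "well_sorted num (FAtom p ts) = (\<forall>t\<in>set ts. gterm num t)"
| "well_sorted num (FCmp c a b) = (gterm num a \<and> gterm num b)"
| "well_sorted num (FEq a b) = (gterm num a \<and> gterm num b)"
| "well_sorted num (FNot F) = well_sorted num F"
| "well_sorted num (FAnd F G) = (well_sorted num F \<and> well_sorted num G)"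
| "well_sorted num (FOr F G) = (well_sorted num F \<and> well_sorted num G)"
| "well_sorted num (FImp F G) = (well_sorted num F \<and> well_sorted num G)"
| "well_sorted num (FAll v F) = well_sorted num F"
| "well_sorted num (FEx v F) = well_sorted num F"

lemma wf_fm_imp_well_sorted: "wf_fm num F \<Longrightarrow> well_sorted num F"
  by (induction num F rule: well_sorted.induct) auto

fun is_general :: "var \<Rightarrow> bool" where
  "is_general (GV _) = True"
| "is_general (IV _) = False"

definition sort_preserving_renaming :: "(var \<Rightarrow> 'p trm) \<Rightarrow> bool" where
  "sort_preserving_renaming s \<longleftrightarrow> (\<forall>v. \<exists>w. s v = Var w \<and> is_general w = is_general v)"

lemma sort_preserving_renaming_upd:
  "sort_preserving_renaming s \<Longrightarrow> sort_preserving_renaming (s(v := Var v))"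
  unfolding sort_preserving_renaming_def by auto

lemma iterm_gterm_tsubst_renaming:
  assumes "sort_preserving_renaming s"
  shows "iterm num (tsubst s t) = iterm num t \<and> gterm num (tsubst s t) = gterm num t"
proof (induction t)
  case (Var v)
  obtain w where "s v = Var w" "is_general w = is_general v"
    using assms unfolding sort_preserving_renaming_def by blast
  then show ?case by (cases v; cases w) auto
qed auto

lemma well_sorted_fsubst_renaming:
  "sort_preserving_renaming s \<Longrightarrow> well_sorted num (fsubst s F) = well_sorted num F"
  by (induction s F rule: fsubst.induct)
     (auto simp: iterm_gterm_tsubst_renaming sort_preserving_renaming_upd)

lemma well_sorted_inst: "well_sorted num (inst X F Y) = well_sorted num F"
  unfolding inst_def
  by (rule well_sorted_fsubst_renaming)
     (auto simp: sort_preserving_renaming_def split: var.split option.split)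

lemma well_sorted_conj_list: "well_sorted num (conj_list Fs) = (\<forall>F\<in>set Fs. well_sorted num F)"
  by (induction Fs) (auto simp: conj_list_def FTop_def)

lemma well_sorted_disj_list: "well_sorted num (disj_list Fs) = (\<forall>F\<in>set Fs. well_sorted num F)"
  by (induction Fs) (auto simp: disj_list_def)

lemma well_sorted_exs: "well_sorted num (exs vs F) = well_sorted num F"
  by (induction vs) (auto simp: exs_def)

lemma well_sorted_alls: "well_sorted num (alls vs F) = well_sorted num F"
  by (induction vs) (auto simp: alls_def)

lemma well_sorted_eq_tuple: "well_sorted num (eq_tuple xs ys)"
  by (auto simp: eq_tuple_def well_sorted_conj_list)

lemma well_sorted_DefsS: "F \<in> DefsS num \<Longrightarrow> well_sorted num F"
  unfolding DefsS_def
  by (auto simp: FIff_def exists_ge_def exists_le_def Let_def FTop_def well_sorted_alls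
      well_sorted_exs well_sorted_conj_list well_sorted_disj_list well_sorted_inst
      well_sorted_eq_tuple wf_fm_imp_well_sorted split: prod.split)

definition ht_iso_by :: "('d \<Rightarrow> 'e) \<Rightarrow> (('p, 'n) ipred \<Rightarrow> 'd list \<Rightarrow> bool) \<Rightarrow> ('p, 'n, 'd) interp
    \<Rightarrow> (('p, 'n) ipred \<Rightarrow> 'e list \<Rightarrow> bool) \<Rightarrow> ('p, 'n, 'e) interp \<Rightarrow> bool" where
  "ht_iso_by f H I H' J \<longleftrightarrow> bij_betw f (gdom I) (gdom J) \<and> f ` idom I = idom J
     \<and> (\<forall>c. f (cnst I c) = cnst J c)
     \<and> (\<forall>a\<in>idom I. f (fabs I a) = fabs J (f a))
     \<and> (\<forall>a\<in>idom I. \<forall>b\<in>idom I. f (fplus I a b) = fplus J (f a) (f b)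
           \<and> f (fminus I a b) = fminus J (f a) (f b) \<and> f (ftimes I a b) = ftimes J (f a) (f b))
     \<and> (\<forall>c. \<forall>a\<in>gdom I. \<forall>b\<in>gdom I. cmpr I c a b = cmpr J c (f a) (f b))
     \<and> (\<forall>p. \<forall>ds\<in>lists (gdom I). ipr I p ds = ipr J p (map f ds)
                                 \<and> H p ds = H' p (map f ds))"

lemma ht_iso_iff_ex_ht_iso_by: "ht_iso H I H' J \<longleftrightarrow> (\<exists>f. ht_iso_by f H I H' J)"
  unfolding ht_iso_def ht_iso_by_def ..

lemma vdom_ht_iso_by: "ht_iso_by f H I H' J \<Longrightarrow> vdom J v = f ` vdom I v"
  by (cases v) (auto simp: ht_iso_by_def bij_betw_def)

lemma valid_env_ht_iso_by:
  "ht_iso_by f H I H' J \<Longrightarrow> valid_env I e \<Longrightarrow> valid_env J (f \<circ> e)"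
  by (auto simp: valid_env_def vdom_ht_iso_by)

lemma valid_env_fun_upd: "valid_env I e \<Longrightarrow> d \<in> vdom I v \<Longrightarrow> valid_env I (e(v := d))"
  unfolding valid_env_def by auto

lemma teval_ht_iso_by:
  assumes I: "is_interp num I" and f: "ht_iso_by f H I H' J" and e: "valid_env I e"
  shows "(iterm num t \<longrightarrow> teval I e t \<in> idom I \<and> f (teval I e t) = teval J (f \<circ> e) t)
       \<and> (gterm num t \<longrightarrow> teval I e t \<in> gdom I \<and> f (teval I e t) = teval J (f \<circ> e) t)"
proof (induction t)
  case (Var v)
  have "e v \<in> vdom I v" using e by (simp add: valid_env_def)
  with I show ?case by (cases v) (auto simp: is_interp_def)
qed (use I f in \<open>auto simp: is_interp_def ht_iso_by_def\<close>)

lemma map_teval_ht_iso_by: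
  assumes "is_interp num I" "ht_iso_by f H I H' J" "valid_env I e" "\<forall>t\<in>set ts. gterm num t"
  shows "map (teval I e) ts \<in> lists (gdom I)"
    and "map f (map (teval I e) ts) = map (teval J (f \<circ> e)) ts"
  using assms teval_ht_iso_by[OF assms(1-3)] by auto

lemma csat_ht_iso_by:
  assumes I: "is_interp num I" and f: "ht_iso_by f H I H' J"
  shows "valid_env I e \<Longrightarrow> well_sorted num F \<Longrightarrow> csat I e F = csat J (f \<circ> e) F"
proof (induction F arbitrary: e rule: fm.induct[where ?P2.0="\<lambda>_. True"])
  case (FAtom p ts)
  with f show ?case
    using map_teval_ht_iso_by[OF I f FAtom.prems(1)]
    by (simp add: ht_iso_by_def comp_def del: map_map)
next
  case (FCmp c a b)
  then show ?case
    using teval_ht_iso_by[OF I f FCmp.prems(1)] f by (auto simp: ht_iso_by_def comp_def)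
next
  case (FEq a b)
  have "inj_on f (gdom I)" using f by (simp add: ht_iso_by_def bij_betw_def)
  moreover have "teval I e a \<in> gdom I" "teval I e b \<in> gdom I"
    and "f (teval I e a) = teval J (f \<circ> e) a" "f (teval I e b) = teval J (f \<circ> e) b"
    using FEq.prems teval_ht_iso_by[OF I f FEq.prems(1)] by auto
  ultimately have "teval I e a = teval I e b \<longleftrightarrow> teval J (f \<circ> e) a = teval J (f \<circ> e) b"
    by (metis inj_on_eq_iff)
  then show ?case by (simp add: comp_def)
qed (auto simp: vdom_ht_iso_by[OF f] fun_upd_comp valid_env_fun_upd)

lemma hsat_ht_iso_by:
  assumes I: "is_interp num I" and f: "ht_iso_by f H I H' J"
  shows "valid_env I e \<Longrightarrow> well_sorted num F \<Longrightarrow> hsat H I e F = hsat H' J (f \<circ> e) F"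
proof (induction F arbitrary: e rule: fm.induct[where ?P2.0="\<lambda>_. True"])
  case (FAtom p ts)
  with f show ?case
    using map_teval_ht_iso_by[OF I f FAtom.prems(1)]
    by (simp add: ht_iso_by_def comp_def del: map_map)
next
  case (FCmp c a b)
  then show ?case using csat_ht_iso_by[OF I f FCmp.prems] by (simp add: comp_def)
next
  case (FEq a b)
  then show ?case using csat_ht_iso_by[OF I f FEq.prems] by (simp add: comp_def)
next
  case (FNot F)
  then show ?case using csat_ht_iso_by[OF I f FNot.prems] by (simp add: comp_def)
next
  case (FImp F G)
  then show ?case using csat_ht_iso_by[OF I f FImp.prems] by (simp add: comp_def)
qed (auto simp: vdom_ht_iso_by[OF f] fun_upd_comp valid_env_fun_upd)

lemma hsat_sent_ht_iso_by:
  assumes I: "is_interp num I" and f: "ht_iso_by f H I H' J" and F: "well_sorted num F"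
  shows "hsat_sent H I F \<longleftrightarrow> hsat_sent H' J F"
proof
  assume "hsat_sent H I F"
  show "hsat_sent H' J F"
    unfolding hsat_sent_def
  proof (intro allI impI)
    fix e' assume e': "valid_env J e'"
    define e where "e v = inv_into (vdom I v) f (e' v)" for v
    have "e' v \<in> f ` vdom I v" for v
      using e' vdom_ht_iso_by[OF f] by (auto simp: valid_env_def)
    then have "valid_env I e" and "f \<circ> e = e'"
      by (auto simp: valid_env_def e_def inv_into_into f_inv_into_f)
    with \<open>hsat_sent H I F\<close> show "hsat H' J e' F"
      using hsat_ht_iso_by[OF I f _ F] by (auto simp: hsat_sent_def)
  qed
next
  assume "hsat_sent H' J F"
  then show "hsat_sent H I F"
    using hsat_ht_iso_by[OF I f _ F] valid_env_ht_iso_by[OF f] by (auto simp: hsat_sent_def)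
qed

lemma hsat_no_atoms: "no_atoms F \<Longrightarrow> hsat H I e F = csat I e F"
  by (induction F arbitrary: e rule: no_atoms.induct) auto

lemma hsat_sent_no_atoms: "no_atoms F \<Longrightarrow> hsat_sent H I F \<longleftrightarrow> csat_sent I F"
  by (simp add: hsat_sent_def csat_sent_def hsat_no_atoms)

fun std_cmp :: "cmp \<Rightarrow> 'p::linorder \<Rightarrow> 'p \<Rightarrow> bool" where
  "std_cmp CNe = (\<noteq>)"
| "std_cmp CLt = (<)"
| "std_cmp CGt = (>)"
| "std_cmp CLe = (\<le>)"
| "std_cmp CGe = (\<ge>)"

lemma std0_cmpr: "std0 num J \<Longrightarrow> cmpr J c = std_cmp c"
  by (cases c) (auto simp: std0_def fun_eq_iff)

lemma std0_cnst: "std0 num J \<Longrightarrow> cnst J c = c"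
  by (simp add: std0_def)

lemma std0_is_interp: "std0 num J \<Longrightarrow> is_interp num J"
  by (auto simp: std0_def is_interp_def)

lemma valid_env_const_num: "is_interp num I \<Longrightarrow> valid_env I (\<lambda>_. cnst I (num n))"
  unfolding valid_env_def is_interp_def by (metis subsetD vdom.elims)

lemma omega_interp_if_ht_iso_by_std0:
  assumes I: "is_interp num I" and f: "ht_iso_by f H I H' J" and J: "std0 num J"
  shows "omega_interp num I"
  unfolding omega_interp_def
proof (intro conjI ballI)
  have inj: "inj_on f (gdom I)" and f_cnst: "\<And>c. f (cnst I c) = c"
    and cnst_gdom: "\<And>c. cnst I c \<in> gdom I" and idom_gdom: "idom I \<subseteq> gdom I"
    using I f J by (auto simp: ht_iso_by_def bij_betw_def std0_def is_interp_def)
  fix d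
  show "\<exists>c. cnst I c = d" if "d \<in> gdom I"
    using that inj_onD[OF inj f_cnst[of "f d"]] cnst_gdom by blast
  show "\<exists>n. cnst I (num n) = d" if d: "d \<in> idom I"
  proof -
    have "f d \<in> range num" using f J d by (auto simp: ht_iso_by_def std0_def)
    then obtain n where "f d = num n" by blast
    then show ?thesis
      using inj_onD[OF inj, of "cnst I (num n)" d] f_cnst d idom_gdom cnst_gdom by auto
  qed
qed

lemma omega_model_if_ht_iso_by_std_ht:
  assumes H: "ht_interp num H I" and f: "ht_iso_by f H I H' J" and J: "std_ht num H' J"
  shows "omega_model num (StdS num \<union> DefsS num) H I"
proof -
  have I: "is_interp num I" and J0: "std0 num J"
    using H J by (auto simp: ht_interp_def std_ht_def)
  have "hsat_sent H I F" if F: "F \<in> StdS num \<union> DefsS num" for F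
  proof -
    have "well_sorted num F"
      using F by (auto simp: StdS_def sentence_def wf_fm_imp_well_sorted well_sorted_DefsS)
    moreover have "hsat_sent H' J F"
      using F J by (auto simp: StdS_def std_ht_def hsat_sent_no_atoms)
    ultimately show ?thesis using hsat_sent_ht_iso_by[OF I f] by blast
  qed
  with H omega_interp_if_ht_iso_by_std0[OF I f J0] show ?thesis
    by (simp add: omega_model_def)
qed

lemma csat_agrees_with_std0:
  fixes num :: "int \<Rightarrow> 'p::linorder" and A :: "('p, 'n) fm"
  assumes Std: "\<forall>F\<in>StdS num. hsat_sent H I F" and e: "valid_env I e"
    and A: "sentence num A" "no_atoms A"
    and std: "\<forall>J :: ('p, 'n, 'p) interp. std0 num J \<longrightarrow> (\<forall>e. csat J e A = b)"
  shows "csat I e A = b"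
proof -
  define F where "F = (if b then A else FNot A)"
  have "no_atoms F" using A by (simp add: F_def)
  moreover have "F \<in> StdS num"
    using A std by (cases b) (auto simp: F_def StdS_def sentence_def csat_sent_def)
  ultimately have "csat I e F" using Std e by (auto simp: hsat_sent_def hsat_no_atoms)
  then show ?thesis by (cases b) (auto simp: F_def)
qed

lemma
  fixes num :: "int \<Rightarrow> 'p::linorder" and I :: "('p, 'n, 'd) interp"
  assumes I: "is_interp num I" and Std: "\<forall>F\<in>StdS num. hsat_sent H I F"
  shows inj_cnst_if_StdS: "inj (cnst I)"
    and fabs_cnst_if_StdS: "fabs I (cnst I (num a)) = cnst I (num \<bar>a\<bar>)"
    and fplus_cnst_if_StdS: "fplus I (cnst I (num a)) (cnst I (num b)) = cnst I (num (a + b))"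
    and fminus_cnst_if_StdS: "fminus I (cnst I (num a)) (cnst I (num b)) = cnst I (num (a - b))"
    and ftimes_cnst_if_StdS: "ftimes I (cnst I (num a)) (cnst I (num b)) = cnst I (num (a * b))"
    and cmpr_cnst_if_StdS: "cmpr I c (cnst I x) (cnst I y) = std_cmp c x y"
proof -
  let ?e = "\<lambda>_. cnst I (num 0)"
  have agree: "csat I ?e A = b"
    if "sentence num A" "no_atoms A" "\<forall>J. std0 num J \<longrightarrow> (\<forall>e. csat J e A = b)"
    for A :: "('p, 'n) fm" and b
    using csat_agrees_with_std0[OF Std valid_env_const_num[OF I] that] .
  have "csat I ?e (FEq (Cst x) (Cst y)) = (x = y)" for x y
    by (rule agree) (auto simp: sentence_def std0_def)
  then show "inj (cnst I)" by (auto intro: injI)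
  have "csat I ?e (FEq (Absv (Cst (num a))) (Cst (num \<bar>a\<bar>))) = True"
    by (rule agree) (auto simp: sentence_def std0_def)
  then show "fabs I (cnst I (num a)) = cnst I (num \<bar>a\<bar>)" by simp
  have "csat I ?e (FEq (Add (Cst (num a)) (Cst (num b))) (Cst (num (a + b)))) = True"
    by (rule agree) (auto simp: sentence_def std0_def)
  then show "fplus I (cnst I (num a)) (cnst I (num b)) = cnst I (num (a + b))" by simp
  have "csat I ?e (FEq (Sub (Cst (num a)) (Cst (num b))) (Cst (num (a - b)))) = True"
    by (rule agree) (auto simp: sentence_def std0_def)
  then show "fminus I (cnst I (num a)) (cnst I (num b)) = cnst I (num (a - b))" by simp
  have "csat I ?e (FEq (Mul (Cst (num a)) (Cst (num b))) (Cst (num (a * b)))) = True"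
    by (rule agree) (auto simp: sentence_def std0_def)
  then show "ftimes I (cnst I (num a)) (cnst I (num b)) = cnst I (num (a * b))" by simp
  have "csat I ?e (FCmp c (Cst x) (Cst y)) = std_cmp c x y"
    by (rule agree) (auto simp: sentence_def std0_cmpr std0_cnst)
  then show "cmpr I c (cnst I x) (cnst I y) = std_cmp c x y" by simp
qed

definition std_copy :: "(int \<Rightarrow> 'p) \<Rightarrow> ('p, 'n, 'd) interp \<Rightarrow> ('p, 'n, 'p) interp" where
  "std_copy num I = \<lparr>gdom = UNIV, idom = range num, cnst = (\<lambda>c. c),
     fabs = (\<lambda>x. inv (cnst I) (fabs I (cnst I x))),
     fplus = (\<lambda>x y. inv (cnst I) (fplus I (cnst I x) (cnst I y))),
     fminus = (\<lambda>x y. inv (cnst I) (fminus I (cnst I x) (cnst I y))),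
     ftimes = (\<lambda>x y. inv (cnst I) (ftimes I (cnst I x) (cnst I y))),
     cmpr = (\<lambda>c x y. cmpr I c (cnst I x) (cnst I y)),
     ipr = (\<lambda>p ds. ipr I p (map (cnst I) ds))\<rparr>"

lemma std0_std_copy:
  fixes num :: "int \<Rightarrow> 'p::linorder" and I :: "('p, 'n, 'd) interp"
  assumes I: "is_interp num I" and Std: "\<forall>F\<in>StdS num. hsat_sent H I F"
  shows "std0 num (std_copy num I)"
  using inj_cnst_if_StdS[OF I Std] fabs_cnst_if_StdS[OF I Std] fplus_cnst_if_StdS[OF I Std]
    fminus_cnst_if_StdS[OF I Std] ftimes_cnst_if_StdS[OF I Std] cmpr_cnst_if_StdS[OF I Std]
  by (simp add: std0_def std_copy_def)

lemma ht_interp_std_copy: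
  assumes H: "ht_interp num H I" and J: "std0 num (std_copy num I)"
  shows "ht_interp num (\<lambda>p ds. H p (map (cnst I) ds)) (std_copy num I)"
  unfolding ht_interp_def
proof (rule conjI; (intro allI impI)?)
  show "is_interp num (std_copy num I)" using std0_is_interp[OF J] .
next
  fix p ds assume "H p (map (cnst I) ds)"
  with H have "wf_pred num p (arity p) \<and> length (map (cnst I) ds) = arity p
      \<and> ipr I p (map (cnst I) ds)"
    unfolding ht_interp_def by blast
  then show "wf_pred num p (arity p) \<and> length ds = arity p \<and> set ds \<subseteq> gdom (std_copy num I)
      \<and> ipr (std_copy num I) p ds"
    by (simp add: std_copy_def)
qed

lemma ht_iso_by_std_copy:
  assumes I: "is_interp num I" and \<omega>: "omega_interp num I" and inj: "inj (cnst I)"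
  shows "ht_iso_by (inv (cnst I)) H I (\<lambda>p ds. H p (map (cnst I) ds)) (std_copy num I)"
proof -
  have gdom: "gdom I = range (cnst I)" and idom: "idom I = cnst I ` range num"
    and idom_gdom: "idom I \<subseteq> gdom I"
    using I \<omega> by (auto simp: is_interp_def omega_interp_def)
  have cnst_inv: "cnst I (inv (cnst I) d) = d" if "d \<in> gdom I" for d
    using that gdom by (auto simp: f_inv_into_f)
  have map_cnst_inv: "map (cnst I) (map (inv (cnst I)) ds) = ds" if "ds \<in> lists (gdom I)" for ds
    using that cnst_inv by (induction ds) auto
  have "bij_betw (inv (cnst I)) (gdom I) UNIV"
    using bij_betw_inv_into[OF inj_on_imp_bij_betw[OF inj]] gdom by simp
  moreover have "inv (cnst I) ` idom I = range num"
    by (simp add: idom image_image inv_f_f[OF inj])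
  moreover have "cnst I (inv (cnst I) a) = a" if "a \<in> idom I" for a
    using that idom_gdom cnst_inv by blast
  ultimately show ?thesis
    unfolding ht_iso_by_def std_copy_def
    by (simp add: inv_f_f[OF inj] cnst_inv map_cnst_inv del: map_map)
qed

lemma std_copy_if_omega_model:
  fixes num :: "int \<Rightarrow> 'p::linorder" and I :: "('p, 'n, 'd) interp"
  assumes "omega_model num (StdS num \<union> DefsS num) H I"
  defines "H' \<equiv> \<lambda>p ds. H p (map (cnst I) ds)"
  shows "std_ht num H' (std_copy num I) \<and> ht_iso_by (inv (cnst I)) H I H' (std_copy num I)"
proof -
  have H: "ht_interp num H I" and I: "is_interp num I" and \<omega>: "omega_interp num I"
    and Std: "\<forall>F\<in>StdS num. hsat_sent H I F" and Defs: "\<forall>F\<in>DefsS num. hsat_sent H I F"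
    using assms by (auto simp: omega_model_def ht_interp_def)
  have J: "std0 num (std_copy num I)" using std0_std_copy[OF I Std] .
  have f: "ht_iso_by (inv (cnst I)) H I H' (std_copy num I)"
    unfolding H'_def using ht_iso_by_std_copy[OF I \<omega> inj_cnst_if_StdS[OF I Std]] .
  have "\<forall>F\<in>DefsS num. hsat_sent H' (std_copy num I) F"
    using Defs hsat_sent_ht_iso_by[OF I f] well_sorted_DefsS by blast
  with J ht_interp_std_copy[OF H J] f show ?thesis
    by (simp add: std_ht_def H'_def)
qed

theorem lemma4:
  fixes num :: "int \<Rightarrow> 'p::linorder"
    and H :: "('p, 'n) ipred \<Rightarrow> 'd list \<Rightarrow> bool"
    and I :: "('p, 'n, 'd) interp"
  assumes num_mono: "strict_mono num"
    and num_contig: "\<forall>t a b. num a < t \<and> t < num b \<longrightarrow> t \<in> range num"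
    and ht: "ht_interp num H I"
  shows "(\<exists>(H' :: ('p, 'n) ipred \<Rightarrow> 'p list \<Rightarrow> bool) (J :: ('p, 'n, 'p) interp).
            std_ht num H' J \<and> ht_iso H I H' J)
         \<longleftrightarrow> omega_model num (StdS num \<union> DefsS num) H I"
  using omega_model_if_ht_iso_by_std_ht[OF ht] std_copy_if_omega_model
  unfolding ht_iso_iff_ex_ht_iso_by by blast

end
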